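(* Let $X_1,X_2,\dots$ be i.i.d. $\mathbb{Z}$-valued random variables and $S_n=\sum_{j=1}^nX_j$. For every $N\in\mathbb{N}\setminus\{1\}$, $$\frac{1}{1+\sum_{i=1}^{N-1}P\{S_i\in[i]_N\}}\le\mathbb{P}^{(N)}_{\mathcal{R}}\Big(\bigcup_{n=1}^N\{\mathcal{R}^{(N)}_n=(n\bmod N)\}\Big)\le\frac{2}{1+\sum_{i=1}^{N-1}P\{S_i\in[i]_N\}}.$$
   Context: $X_j$ live on $(\Omega,\mathcal{F},P)$. $[y]_N=\{y+kN:k\in\mathbb{Z}\}$. For $N\in\mathbb{N}$, $X^{(N)}_0$ is uniform on $\{0,\dots,N-1\}$ under $(\Omega_N,\mathcal{F}_N,\mu_N)$; $(b\bmod N)$ is the remainder of $b\in\mathbb{Z}$ divided by $N$; $\mathcal{R}^{(N)}_n=(X^{(N)}_0+S_n\bmod N)$; $\mathbb{P}^{(N)}_{\mathcal{R}}=\mu_N\times P$. *)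

theory Defs
  imports "HOL-Probability.Probability"
begin

definition partial_sum :: "(nat \<Rightarrow> 'a \<Rightarrow> int) \<Rightarrow> nat \<Rightarrow> 'a \<Rightarrow> int" where
  "partial_sum X n \<omega> = (\<Sum>j\<in>{1..n}. X j \<omega>)"

text \<open>The product space mu_N x P, with X_0^(N) uniform on {0,...,N-1}.\<close>
definition R_space :: "nat \<Rightarrow> 'a measure \<Rightarrow> (nat \<times> 'a) measure" where
  "R_space N M = measure_pmf (pmf_of_set {0..<N}) \<Otimes>\<^sub>M M"

definition R_proc :: "nat \<Rightarrow> (nat \<Rightarrow> 'a \<Rightarrow> int) \<Rightarrow> nat \<Rightarrow> nat \<times> 'a \<Rightarrow> int" where
  "R_proc N X n z = (int (fst z) + partial_sum X n (snd z)) mod int N"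

end

theory Submission
  imports Defs
begin

text \<open>
  Since X_0 + S_n \<equiv> n (mod N) means X_0 = V_n := (n - S_n) mod N, and X_0 is uniform and
  independent of the walk, the probability in question is the expected number of distinct
  values among V_1, ..., V_N, divided by N. Count these values by their first visits t.
  For first visits t \<le> N the sets of times n \<in> [t, T] with V_n = V_t are disjoint subsets
  of [1, T], and they cover [1, N] when T = N; so their total size is N for T = N and at
  most 2N for T = 2N. That t is a first visit depends only on X_1, ..., X_t, whereas
  V_(t+k) = V_t depends only on X_(t+1), ..., X_(t+k) and has probability p_k = P{S_k \<in> [k]_N}.
  Taking expectations of the two counts gives N \<le> E(number of values) * (p_0 + ... + p_(N-1)) \<le> 2N,
  and p_0 = 1.
\<close>

definition first_visit :: "(nat \<Rightarrow> 'b) \<Rightarrow> nat \<Rightarrow> bool" where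
  "first_visit V t \<longleftrightarrow> (\<forall>s\<in>{1..<t}. V s \<noteq> V t)"

lemma card_image_eq_card_first_visits:
  "card (V ` {1..N}) = card {t\<in>{1..N}. first_visit V t}"
proof (induction N)
  case (Suc N)
  have interval: "{1..Suc N} = insert (Suc N) {1..N}" by auto
  have "first_visit V (Suc N) \<longleftrightarrow> V (Suc N) \<notin> V ` {1..N}"
    unfolding first_visit_def atLeastLessThanSuc_atLeastAtMost by (metis imageE imageI)
  moreover have "{t\<in>{1..Suc N}. first_visit V t} =
      (if first_visit V (Suc N) then insert (Suc N) {t\<in>{1..N}. first_visit V t}
       else {t\<in>{1..N}. first_visit V t})"
    unfolding interval by auto
  moreover have "V ` {1..Suc N} = insert (V (Suc N)) (V ` {1..N})"
    unfolding interval by simp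
  ultimately show ?case
    using Suc.IH by (auto simp: insert_absorb)
qed simp

lemma disjoint_family_on_revisits:
  "disjoint_family_on (\<lambda>t. {n\<in>{t..T}. V n = V t}) {t\<in>{1..N}. first_visit V t}"
  unfolding disjoint_family_on_def
proof (intro ballI impI)
  fix i j assume i: "i \<in> {t\<in>{1..N}. first_visit V t}" and j: "j \<in> {t\<in>{1..N}. first_visit V t}"
    and "i \<noteq> j"
  show "{n\<in>{i..T}. V n = V i} \<inter> {n\<in>{j..T}. V n = V j} = {}"
  proof (rule ccontr)
    assume "{n\<in>{i..T}. V n = V i} \<inter> {n\<in>{j..T}. V n = V j} \<noteq> {}"
    then have "V i = V j" by auto
    with i j \<open>i \<noteq> j\<close> show False
      by (cases "i < j") (auto simp: first_visit_def)
  qed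
qed

definition revisit_count :: "(nat \<Rightarrow> 'b) \<Rightarrow> nat \<Rightarrow> nat \<Rightarrow> nat" where
  "revisit_count V N T = (\<Sum>t | t \<in> {1..N} \<and> first_visit V t. card {n\<in>{t..T}. V n = V t})"

lemma revisit_count_le:
  assumes "N \<le> T"
  shows "revisit_count V N T \<le> T"
proof -
  have "revisit_count V N T = card (\<Union>t\<in>{t\<in>{1..N}. first_visit V t}. {n\<in>{t..T}. V n = V t})"
    unfolding revisit_count_def
    using disjoint_family_on_revisits by (intro card_UN_disjoint' [symmetric]) auto
  also have "\<dots> \<le> card {1..T}"
    by (rule card_mono) auto
  finally show ?thesis by simp
qed

lemma revisit_count_self: "revisit_count V N N = N"
proof (rule antisym [OF revisit_count_le [OF order_refl]])
  have cover: "{1..N} \<subseteq> (\<Union>t\<in>{t\<in>{1..N}. first_visit V t}. {n\<in>{t..N}. V n = V t})"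
  proof
    fix n assume n: "n \<in> {1..N}"
    define t where "t = (LEAST s. 1 \<le> s \<and> V s = V n)"
    have t: "1 \<le> t \<and> V t = V n"
      unfolding t_def by (rule LeastI [of _ n]) (use n in auto)
    have "t \<le> n"
      unfolding t_def by (rule Least_le) (use n in auto)
    moreover have "first_visit V t"
      unfolding first_visit_def
    proof
      fix s assume "s \<in> {1..<t}"
      then have "\<not> (1 \<le> s \<and> V s = V n)"
        unfolding t_def by (intro not_less_Least) auto
      with \<open>s \<in> {1..<t}\<close> show "V s \<noteq> V t" using t by auto
    qed
    ultimately show "n \<in> (\<Union>t\<in>{t\<in>{1..N}. first_visit V t}. {n\<in>{t..N}. V n = V t})"
      using n t by auto
  qed
  have "N \<le> card (\<Union>t\<in>{t\<in>{1..N}. first_visit V t}. {n\<in>{t..N}. V n = V t})"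
    using card_mono [OF _ cover] by simp
  also have "\<dots> = revisit_count V N N"
    unfolding revisit_count_def
    using disjoint_family_on_revisits by (intro card_UN_disjoint') auto
  finally show "N \<le> \<dots>" .
qed

lemma card_revisits_eq_sum:
  fixes t T :: nat
  assumes "t \<le> T"
  shows "card {n\<in>{t..T}. V n = V t} = (\<Sum>k=0..T-t. of_bool (V (t + k) = V t))"
proof -
  have "{n\<in>{t..T}. V n = V t} = (+) t ` ({0..T-t} \<inter> {k. V (t + k) = V t})"
  proof (intro set_eqI iffI)
    fix n assume "n \<in> {n\<in>{t..T}. V n = V t}"
    then show "n \<in> (+) t ` ({0..T-t} \<inter> {k. V (t + k) = V t})"
      by (intro image_eqI [of _ _ "n - t"]) auto
  qed (use assms in auto)
  then show ?thesis
    by (simp add: card_image)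
qed

lemma revisit_count_eq_sum_of_bool:
  assumes "N \<le> T"
  shows "revisit_count V N T = (\<Sum>t=1..N. \<Sum>k=0..T-t. of_bool (first_visit V t \<and> V (t + k) = V t))"
proof -
  have "revisit_count V N T = (\<Sum>t=1..N. if first_visit V t then card {n\<in>{t..T}. V n = V t} else 0)"
    unfolding revisit_count_def by (simp only: sum.inter_filter finite_atLeastAtMost)
  also have "\<dots> = (\<Sum>t=1..N. \<Sum>k=0..T-t. of_bool (first_visit V t \<and> V (t + k) = V t))"
  proof (rule sum.cong [OF refl])
    fix t assume "t \<in> {1..N}"
    then have "card {n\<in>{t..T}. V n = V t} = (\<Sum>k=0..T-t. of_bool (V (t + k) = V t))"
      using assms by (intro card_revisits_eq_sum) simp
    then show "(if first_visit V t then card {n\<in>{t..T}. V n = V t} else 0)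
        = (\<Sum>k=0..T-t. of_bool (first_visit V t \<and> V (t + k) = V t))"
      by simp
  qed
  finally show ?thesis .
qed

lemma measurable_count_space_sum [measurable (raw)]:
  fixes f :: "'i \<Rightarrow> 'a \<Rightarrow> 'b::{countable, comm_monoid_add}"
  assumes "\<And>i. i \<in> I \<Longrightarrow> f i \<in> M \<rightarrow>\<^sub>M count_space UNIV"
  shows "(\<lambda>x. \<Sum>i\<in>I. f i x) \<in> M \<rightarrow>\<^sub>M count_space UNIV"
proof (cases "finite I")
  case True
  then show ?thesis
    using assms by (induction I rule: finite_induct) simp_all
qed simp

definition hit_residue :: "nat \<Rightarrow> (nat \<Rightarrow> 'a \<Rightarrow> int) \<Rightarrow> nat \<Rightarrow> 'a \<Rightarrow> int" where
  "hit_residue N X n \<omega> = (int n - partial_sum X n \<omega>) mod int N"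

lemma hit_residue_shift_eq_iff:
  "hit_residue N X (t + k) \<omega> = hit_residue N X t \<omega>
     \<longleftrightarrow> (\<Sum>j\<in>{t+1..t+k}. X j \<omega>) mod int N = int k mod int N"
proof -
  define Z where "Z = (\<Sum>j\<in>{t+1..t+k}. X j \<omega>)"
  have "partial_sum X (t + k) \<omega> = partial_sum X t \<omega> + Z"
    unfolding partial_sum_def Z_def by (rule sum.ub_add_nat) simp
  moreover have "int (t + k) - (partial_sum X t \<omega> + Z) - (int t - partial_sum X t \<omega>) = - (Z - int k)"
    by simp
  ultimately show ?thesis
    unfolding hit_residue_def mod_eq_dvd_iff Z_def [symmetric] by (simp only: dvd_minus_iff)
qed

lemma R_proc_eq_iff_hit_residue:
  assumes "x < N"
  shows "R_proc N X n (x, \<omega>) = int n mod int N \<longleftrightarrow> int x = hit_residue N X n \<omega>"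
proof -
  have "R_proc N X n (x, \<omega>) = int n mod int N \<longleftrightarrow> int N dvd int x - (int n - partial_sum X n \<omega>)"
    unfolding R_proc_def mod_eq_dvd_iff by (simp add: algebra_simps)
  also have "\<dots> \<longleftrightarrow> int x mod int N = hit_residue N X n \<omega>"
    unfolding hit_residue_def mod_eq_dvd_iff ..
  finally show ?thesis
    using assms by simp
qed

lemma card_hit_section:
  assumes "N \<ge> 1"
  shows "card {x\<in>{0..<N}. \<exists>n\<in>{1..N}. R_proc N X n (x, \<omega>) = int n mod int N}
       = card ((\<lambda>n. hit_residue N X n \<omega>) ` {1..N})"
proof -
  have "{x\<in>{0..<N}. \<exists>n\<in>{1..N}. R_proc N X n (x, \<omega>) = int n mod int N}
      = nat ` (\<lambda>n. hit_residue N X n \<omega>) ` {1..N}"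
  proof (intro set_eqI iffI)
    fix x assume "x \<in> {x\<in>{0..<N}. \<exists>n\<in>{1..N}. R_proc N X n (x, \<omega>) = int n mod int N}"
    then obtain n where "x < N" "n \<in> {1..N}" "R_proc N X n (x, \<omega>) = int n mod int N"
      by auto
    then show "x \<in> nat ` (\<lambda>n. hit_residue N X n \<omega>) ` {1..N}"
      by (auto simp: R_proc_eq_iff_hit_residue image_iff intro!: bexI [of _ n])
  next
    fix x assume "x \<in> nat ` (\<lambda>n. hit_residue N X n \<omega>) ` {1..N}"
    then obtain n where n: "n \<in> {1..N}" and x: "x = nat (hit_residue N X n \<omega>)"
      by auto
    have "0 \<le> hit_residue N X n \<omega>" "hit_residue N X n \<omega> < int N"
      using assms by (simp_all add: hit_residue_def)
    with n x show "x \<in> {x\<in>{0..<N}. \<exists>n\<in>{1..N}. R_proc N X n (x, \<omega>) = int n mod int N}"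
      by (auto simp: R_proc_eq_iff_hit_residue)
  qed
  moreover have "inj_on nat ((\<lambda>n. hit_residue N X n \<omega>) ` {1..N})"
    by (rule inj_on_subset [of nat "{0..}"]) (use assms in \<open>auto simp: inj_on_def hit_residue_def\<close>)
  ultimately show ?thesis
    by (simp add: card_image)
qed

lemma (in prob_space) integrable_of_bool:
  "P \<in> M \<rightarrow>\<^sub>M count_space UNIV \<Longrightarrow> integrable M (\<lambda>\<omega>. of_bool (P \<omega>) :: real)"
  by (rule integrable_const_bound [where B = 1]) auto

lemma (in prob_space) expectation_of_bool:
  assumes "P \<in> M \<rightarrow>\<^sub>M count_space UNIV"
  shows "expectation (\<lambda>\<omega>. of_bool (P \<omega>)) = prob {\<omega>\<in>space M. P \<omega>}"
proof -
  have "expectation (\<lambda>\<omega>. of_bool (P \<omega>)) = expectation (indicator {\<omega>\<in>space M. P \<omega>})"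
    by (intro Bochner_Integration.integral_cong) (auto simp: indicator_def)
  also have "\<dots> = prob ({\<omega>\<in>space M. P \<omega>} \<inter> space M)"
    by (rule Bochner_Integration.integral_indicator)
  finally show ?thesis
    by (simp add: Int_absorb2)
qed

locale iid_walk = prob_space M for M :: "'a measure" +
  fixes X :: "nat \<Rightarrow> 'a \<Rightarrow> int"
  assumes indep: "indep_vars (\<lambda>_. count_space UNIV) X {1..}"
    and ident_distr: "\<And>j. j \<ge> 1 \<Longrightarrow> distr M (count_space UNIV) (X j) = distr M (count_space UNIV) (X 1)"
begin

lemma X_measurable [measurable]: "j \<in> {1..} \<Longrightarrow> X j \<in> M \<rightarrow>\<^sub>M count_space UNIV"
  using indep unfolding indep_vars_def by auto

lemma partial_sum_measurable [measurable]: "partial_sum X n \<in> M \<rightarrow>\<^sub>M count_space UNIV"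
  unfolding partial_sum_def [abs_def] by measurable

lemma hit_residue_measurable [measurable]: "hit_residue N X n \<in> M \<rightarrow>\<^sub>M count_space UNIV"
  unfolding hit_residue_def [abs_def] by measurable

lemma distr_block:
  assumes "J \<subseteq> {1..}" "J \<noteq> {}"
  shows "distr M (\<Pi>\<^sub>M j\<in>J. count_space UNIV) (\<lambda>\<omega>. \<lambda>j\<in>J. X j \<omega>)
       = (\<Pi>\<^sub>M j\<in>J. distr M (count_space UNIV) (X 1))"
proof -
  have "distr M (\<Pi>\<^sub>M j\<in>J. count_space UNIV) (\<lambda>\<omega>. \<lambda>j\<in>J. X j \<omega>)
      = (\<Pi>\<^sub>M j\<in>J. distr M (count_space UNIV) (X j))"
    using assms indep_vars_subset [OF indep assms(1)]
    by (subst indep_vars_iff_distr_eq_PiM' [symmetric]) auto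
  also have "\<dots> = (\<Pi>\<^sub>M j\<in>J. distr M (count_space UNIV) (X 1))"
    using assms by (intro PiM_cong refl ident_distr) auto
  finally show ?thesis .
qed

lemma distr_block_sum:
  assumes "J \<subseteq> {1..}" "J \<noteq> {}"
  shows "distr M (count_space UNIV) (\<lambda>\<omega>. \<Sum>j\<in>J. X j \<omega>)
       = distr (\<Pi>\<^sub>M j\<in>J. distr M (count_space UNIV) (X 1)) (count_space UNIV) (\<lambda>x. \<Sum>j\<in>J. x j)"
proof -
  have "distr M (count_space UNIV) (\<lambda>\<omega>. \<Sum>j\<in>J. X j \<omega>)
      = distr (distr M (\<Pi>\<^sub>M j\<in>J. count_space UNIV) (\<lambda>\<omega>. \<lambda>j\<in>J. X j \<omega>)) (count_space UNIV)
          (\<lambda>x. \<Sum>j\<in>J. x j)"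
    using assms(1) by (subst distr_distr) (auto simp: comp_def intro!: measurable_restrict)
  then show ?thesis
    by (simp only: distr_block [OF assms])
qed

lemma distr_shifted_block_sum:
  "distr M (count_space UNIV) (\<lambda>\<omega>. \<Sum>j\<in>{t+1..t+k}. X j \<omega>)
   = distr M (count_space UNIV) (\<lambda>\<omega>. \<Sum>j\<in>{1..k}. X j \<omega>)"
proof (cases "k = 0")
  case False
  let ?D = "distr M (count_space UNIV) (X 1)"
  have "prob_space ?D"
    by (intro prob_space_distr) measurable
  then have shift: "distr (\<Pi>\<^sub>M j\<in>{t+1..t+k}. ?D) (\<Pi>\<^sub>M j\<in>{1..k}. ?D) (\<lambda>x. \<lambda>n\<in>{1..k}. x (n + t))
      = (\<Pi>\<^sub>M j\<in>{1..k}. ?D)"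
    using distr_PiM_reindex [of "{t+1..t+k}" "\<lambda>_. ?D" "\<lambda>n. n + t" "{1..k}"] by auto
  have "distr (\<Pi>\<^sub>M j\<in>{t+1..t+k}. ?D) (count_space UNIV) (\<lambda>x. \<Sum>j\<in>{t+1..t+k}. x j)
      = distr (distr (\<Pi>\<^sub>M j\<in>{t+1..t+k}. ?D) (\<Pi>\<^sub>M j\<in>{1..k}. ?D) (\<lambda>x. \<lambda>n\<in>{1..k}. x (n + t)))
          (count_space UNIV) (\<lambda>x. \<Sum>j\<in>{1..k}. x j)"
    by (subst distr_distr) (auto simp: comp_def sum.shift_bounds_cl_nat_ivl [symmetric] add.commute)
  also have "\<dots> = distr (\<Pi>\<^sub>M j\<in>{1..k}. ?D) (count_space UNIV) (\<lambda>x. \<Sum>j\<in>{1..k}. x j)"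
    by (simp only: shift)
  finally show ?thesis
    using False by (simp add: distr_block_sum)
qed simp

definition return_prob :: "nat \<Rightarrow> nat \<Rightarrow> real" where
  "return_prob N k = prob {\<omega>\<in>space M. partial_sum X k \<omega> mod int N = int k mod int N}"

lemma return_prob_0: "return_prob N 0 = 1"
  by (simp add: return_prob_def partial_sum_def prob_space)

lemma prob_block_sum_mod:
  "prob {\<omega>\<in>space M. (\<Sum>j\<in>{t+1..t+k}. X j \<omega>) mod int N = int k mod int N} = return_prob N k"
proof -
  let ?B = "{v. v mod int N = int k mod int N}"
  have "prob {\<omega>\<in>space M. (\<Sum>j\<in>{t+1..t+k}. X j \<omega>) mod int N = int k mod int N}
      = measure (distr M (count_space UNIV) (\<lambda>\<omega>. \<Sum>j\<in>{t+1..t+k}. X j \<omega>)) ?B"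
    by (subst measure_distr) (auto intro!: arg_cong [where f = prob])
  also have "\<dots> = measure (distr M (count_space UNIV) (\<lambda>\<omega>. \<Sum>j\<in>{1..k}. X j \<omega>)) ?B"
    by (simp only: distr_shifted_block_sum)
  also have "\<dots> = return_prob N k"
    unfolding return_prob_def partial_sum_def
    by (subst measure_distr) (auto intro!: arg_cong [where f = prob])
  finally show ?thesis .
qed

lemma first_visit_measurable [measurable]:
  "(\<lambda>\<omega>. first_visit (\<lambda>n. hit_residue N X n \<omega>) t) \<in> M \<rightarrow>\<^sub>M count_space UNIV"
  unfolding first_visit_def by measurable

definition first_visit_prob :: "nat \<Rightarrow> nat \<Rightarrow> real" where
  "first_visit_prob N t = prob {\<omega>\<in>space M. first_visit (\<lambda>n. hit_residue N X n \<omega>) t}"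

lemma prob_first_visit_return:
  "prob {\<omega>\<in>space M. first_visit (\<lambda>n. hit_residue N X n \<omega>) t
                      \<and> hit_residue N X (t + k) \<omega> = hit_residue N X t \<omega>}
   = first_visit_prob N t * return_prob N k"
proof -
  define f where "f x \<longleftrightarrow> first_visit (\<lambda>s. (int s - (\<Sum>j\<in>{1..s}. x j)) mod int N) t" for x :: "nat \<Rightarrow> int"
  define g where "g x \<longleftrightarrow> (\<Sum>j\<in>{t+1..t+k}. x j) mod int N = int k mod int N" for x :: "nat \<Rightarrow> int"
  have "f \<in> (\<Pi>\<^sub>M j\<in>{1..t}. count_space UNIV) \<rightarrow>\<^sub>M count_space UNIV"
    unfolding f_def first_visit_def by measurable
  moreover have "g \<in> (\<Pi>\<^sub>M j\<in>{t+1..t+k}. count_space UNIV) \<rightarrow>\<^sub>M count_space UNIV"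
    unfolding g_def by measurable
  ultimately have "indep_var (count_space UNIV) (\<lambda>\<omega>. f (\<lambda>j\<in>{1..t}. X j \<omega>))
      (count_space UNIV) (\<lambda>\<omega>. g (\<lambda>j\<in>{t+1..t+k}. X j \<omega>))"
    using indep_var_compose [OF indep_var_restrict [OF indep, of "{1..t}" "{t+1..t+k}"]]
    by (auto simp: comp_def)
  then have "\<P>(\<omega> in M. f (\<lambda>j\<in>{1..t}. X j \<omega>) \<in> {True} \<and> g (\<lambda>j\<in>{t+1..t+k}. X j \<omega>) \<in> {True})
      = \<P>(\<omega> in M. f (\<lambda>j\<in>{1..t}. X j \<omega>) \<in> {True}) * \<P>(\<omega> in M. g (\<lambda>j\<in>{t+1..t+k}. X j \<omega>) \<in> {True})"
    by (rule prob_indep_random_variable) auto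
  moreover have "f (\<lambda>j\<in>{1..t}. X j \<omega>) \<longleftrightarrow> first_visit (\<lambda>n. hit_residue N X n \<omega>) t" for \<omega>
    unfolding f_def first_visit_def hit_residue_def partial_sum_def by auto
  moreover have "g (\<lambda>j\<in>{t+1..t+k}. X j \<omega>) \<longleftrightarrow> hit_residue N X (t + k) \<omega> = hit_residue N X t \<omega>" for \<omega>
    unfolding g_def hit_residue_shift_eq_iff by simp
  ultimately show ?thesis
    using prob_block_sum_mod [of t k N]
    unfolding first_visit_prob_def hit_residue_shift_eq_iff by simp
qed

lemma revisit_count_integrable_and_expectation:
  assumes "N \<le> T"
  defines "C \<equiv> \<lambda>\<omega>. real (revisit_count (\<lambda>n. hit_residue N X n \<omega>) N T)"
  shows "integrable M C"
    and "expectation C = (\<Sum>t=1..N. first_visit_prob N t * (\<Sum>k=0..T-t. return_prob N k))"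
proof -
  let ?Q = "\<lambda>t k \<omega>. first_visit (\<lambda>n. hit_residue N X n \<omega>) t
                     \<and> hit_residue N X (t + k) \<omega> = hit_residue N X t \<omega>"
  have Q_measurable: "?Q t k \<in> M \<rightarrow>\<^sub>M count_space UNIV" for t k
    by measurable
  have C_eq: "C = (\<lambda>\<omega>. \<Sum>t=1..N. \<Sum>k=0..T-t. of_bool (?Q t k \<omega>))"
    unfolding C_def using assms by (simp only: revisit_count_eq_sum_of_bool of_nat_sum of_nat_of_bool)
  show "integrable M C"
    unfolding C_eq by (intro Bochner_Integration.integrable_sum integrable_of_bool Q_measurable)
  have "expectation C = (\<Sum>t=1..N. \<Sum>k=0..T-t. prob {\<omega>\<in>space M. ?Q t k \<omega>})"
    unfolding C_eq
    by (simp add: Bochner_Integration.integral_sum Bochner_Integration.integrable_sum integrable_of_bool expectation_of_bool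
        Q_measurable del: sum_of_bool_eq)
  also have "\<dots> = (\<Sum>t=1..N. first_visit_prob N t * (\<Sum>k=0..T-t. return_prob N k))"
    by (simp add: prob_first_visit_return sum_distrib_left)
  finally show "expectation C = \<dots>" .
qed

lemma first_visit_prob_sum_lower:
  "real N \<le> (\<Sum>t=1..N. first_visit_prob N t) * (\<Sum>k<N. return_prob N k)"
proof -
  have "real N = expectation (\<lambda>\<omega>. real (revisit_count (\<lambda>n. hit_residue N X n \<omega>) N N))"
    by (simp add: revisit_count_self prob_space)
  also have "\<dots> = (\<Sum>t=1..N. first_visit_prob N t * (\<Sum>k=0..N-t. return_prob N k))"
    by (rule revisit_count_integrable_and_expectation(2)) simp
  also have "\<dots> \<le> (\<Sum>t=1..N. first_visit_prob N t * (\<Sum>k<N. return_prob N k))"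
    by (intro sum_mono mult_left_mono sum_mono2) (auto simp: first_visit_prob_def return_prob_def)
  finally show ?thesis
    by (simp add: sum_distrib_right)
qed

lemma first_visit_prob_sum_upper:
  "(\<Sum>t=1..N. first_visit_prob N t) * (\<Sum>k<N. return_prob N k) \<le> 2 * real N"
proof -
  have "(\<Sum>t=1..N. first_visit_prob N t) * (\<Sum>k<N. return_prob N k)
      \<le> (\<Sum>t=1..N. first_visit_prob N t * (\<Sum>k=0..2*N-t. return_prob N k))"
    unfolding sum_distrib_right
    by (intro sum_mono mult_left_mono sum_mono2) (auto simp: first_visit_prob_def return_prob_def)
  also have "\<dots> = expectation (\<lambda>\<omega>. real (revisit_count (\<lambda>n. hit_residue N X n \<omega>) N (2 * N)))"
    by (rule revisit_count_integrable_and_expectation(2) [symmetric]) simp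
  also have "\<dots> \<le> 2 * real N"
    using of_nat_mono [OF revisit_count_le [of N "2 * N"]]
    by (intro integral_le_const revisit_count_integrable_and_expectation(1) AE_I2) simp_all
  finally show ?thesis .
qed

lemma R_proc_measurable [measurable]: "R_proc N X n \<in> R_space N M \<rightarrow>\<^sub>M count_space UNIV"
  unfolding R_proc_def [abs_def] R_space_def by measurable

lemma measure_hit_event:
  assumes "N \<ge> 1"
  shows "measure (R_space N M) {z\<in>space (R_space N M). \<exists>n\<in>{1..N}. R_proc N X n z = int n mod int N}
       = (\<Sum>t=1..N. first_visit_prob N t) / real N"
proof -
  let ?U = "measure_pmf (pmf_of_set {0..<N})"
  let ?E = "{z\<in>space (R_space N M). \<exists>n\<in>{1..N}. R_proc N X n z = int n mod int N}"
  let ?range = "\<lambda>\<omega>. (\<Sum>t=1..N. of_bool (first_visit (\<lambda>n. hit_residue N X n \<omega>) t)) / real N"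
  interpret U: pair_prob_space ?U M
    by (intro pair_prob_space.intro pair_sigma_finite.intro prob_space_imp_sigma_finite
        prob_space_measure_pmf prob_space_axioms)
  have "?E \<in> sets (R_space N M)"
    by measurable
  then have "emeasure (R_space N M) ?E = (\<integral>\<^sup>+\<omega>. emeasure ?U ((\<lambda>x. (x, \<omega>)) -` ?E) \<partial>M)"
    unfolding R_space_def by (rule U.emeasure_pair_measure_alt2)
  also have "\<dots> = (\<integral>\<^sup>+\<omega>. ennreal (?range \<omega>) \<partial>M)"
  proof (rule nn_integral_cong)
    fix \<omega> assume "\<omega> \<in> space M"
    then have "(\<lambda>x. (x, \<omega>)) -` ?E = {x. \<exists>n\<in>{1..N}. R_proc N X n (x, \<omega>) = int n mod int N}"
      by (auto simp: R_space_def space_pair_measure)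
    moreover have "card ({0..<N} \<inter> {x. \<exists>n\<in>{1..N}. R_proc N X n (x, \<omega>) = int n mod int N})
        = card {t\<in>{1..N}. first_visit (\<lambda>n. hit_residue N X n \<omega>) t}"
      using card_hit_section [OF assms] card_image_eq_card_first_visits
      by (metis Collect_conj_eq Collect_mem_eq)
    ultimately show "emeasure ?U ((\<lambda>x. (x, \<omega>)) -` ?E) = ennreal (?range \<omega>)"
      using assms by (simp add: measure_pmf.emeasure_eq_measure measure_pmf_of_set Int_def)
  qed
  also have "\<dots> = ennreal (expectation ?range)"
    by (intro nn_integral_eq_integral integrable_divide Bochner_Integration.integrable_sum integrable_of_bool)
      (simp_all add: sum_nonneg)
  also have "expectation ?range = (\<Sum>t=1..N. first_visit_prob N t) / real N"
    by (simp add: Bochner_Integration.integral_sum integrable_of_bool expectation_of_bool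
        first_visit_prob_def del: sum_of_bool_eq)
  finally show ?thesis
    by (simp add: measure_def sum_nonneg first_visit_prob_def)
qed

end

theorem corollary3:
  fixes M :: "'a measure" and X :: "nat \<Rightarrow> 'a \<Rightarrow> int" and N :: nat
  assumes "prob_space M"
    and "prob_space.indep_vars M (\<lambda>_. count_space UNIV) X {1..}"
    and "\<And>j. j \<ge> 1 \<Longrightarrow> distr M (count_space UNIV) (X j) = distr M (count_space UNIV) (X 1)"
    and "N \<ge> 2"
  defines "A \<equiv> 1 + (\<Sum>i\<in>{1..N-1}. measure M {\<omega> \<in> space M. partial_sum X i \<omega> mod int N = int i mod int N})"
  shows "1 / A \<le> measure (R_space N M)
           {z \<in> space (R_space N M). \<exists>n\<in>{1..N}. R_proc N X n z = int n mod int N}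
       \<and> measure (R_space N M)
           {z \<in> space (R_space N M). \<exists>n\<in>{1..N}. R_proc N X n z = int n mod int N} \<le> 2 / A"
proof -
  interpret iid_walk M X
    using assms(1-3) by (intro iid_walk.intro iid_walk_axioms.intro)
  define Q where "Q = (\<Sum>t=1..N. first_visit_prob N t)"
  have "{..<N} = insert 0 {1..N-1}"
    using assms(4) by auto
  then have A_eq: "A = (\<Sum>k<N. return_prob N k)"
    unfolding A_def by (simp add: return_prob_0) (simp add: return_prob_def)
  have "0 < A"
    unfolding A_def by (simp add: add_pos_nonneg sum_nonneg)
  have "0 < real N"
    using assms(4) by simp
  have "1 / A \<le> Q / real N" "Q / real N \<le> 2 / A"
    using first_visit_prob_sum_lower [of N] first_visit_prob_sum_upper [of N] \<open>0 < A\<close> \<open>0 < real N\<close>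
    unfolding Q_def A_eq by (simp_all add: field_simps)
  moreover have "measure (R_space N M) {z \<in> space (R_space N M). \<exists>n\<in>{1..N}. R_proc N X n z = int n mod int N}
      = Q / real N"
    unfolding Q_def using assms(4) by (intro measure_hit_event) simp
  ultimately show ?thesis
    by simp
qed

end
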